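(* Let $D\geq 5$ and $n\geq 1$ be integers. Let $\mathcal{Z}_{(1)},\mathcal{Z}_{(2)},\mathcal{Z}_{(3)},\mathcal{Z}_{(n+2)},\mathcal{Z}_{(n+3)},\mathcal{Z}_{(n+4)}$ be scalar curvature invariants (built from the metric and the Riemann tensor) such that for each order $m\in\{1,2,3,n+2,n+3,n+4\}$ and every function $f(r)$ $$\mathcal{Z}_{(m)}|_f = r^{2-D}\frac{\mathrm{d}}{\mathrm{d}r}\Big[r^{D-1}\psi^{m-1}\big((2m-D)\psi-2mB\big)\Big]=-4m(m-1)B^2\psi^{m-2}+m\big(2A-4(D-2m)B\big)\psi^{m-1}-(D-2m)(D-2m-1)\psi^m.$$ Define $$\mathcal{Z}_{(n+5)}=-\frac{3(n+3)\mathcal{Z}_{(1)}\mathcal{Z}_{(n+4)}}{D(D-1)(n+1)}+\frac{3(n+4)\mathcal{Z}_{(2)}\mathcal{Z}_{(n+3)}}{D(D-1)n}-\frac{(n+3)(n+4)\mathcal{Z}_{(3)}\mathcal{Z}_{(n+2)}}{D(D-1)n(n+1)}.$$ Then for every $f(r)$, $\mathcal{Z}_{(n+5)}|_f$ is given by the same formula with $m=n+5$.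
   Context: Consider the metric $\mathrm{d}s^2=-f(r)\mathrm{d}t^2+\mathrm{d}r^2/f(r)+r^2\mathrm{d}\Sigma^2_{k}$ in $D$ dimensions, where $\mathrm{d}\Sigma^2_k$ is the metric of a $(D-2)$-dimensional space of constant sectional curvature $k\in\{1,0,-1\}$. For a scalar curvature invariant $\mathcal{L}$, $\mathcal{L}|_f$ denotes its evaluation on this metric, a function of $r,f,f',f''$. Set $A=f''(r)/2$, $B=-f'(r)/(2r)$, $\psi=(k-f(r))/r^2$. *)

theory Defs
  imports "HOL-Analysis.Analysis"
begin

definition AQ :: "(real \<Rightarrow> real) \<Rightarrow> real \<Rightarrow> real" where
  "AQ f r = deriv (deriv f) r / 2"
definition BQ :: "(real \<Rightarrow> real) \<Rightarrow> real \<Rightarrow> real" where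
  "BQ f r = - deriv f r / (2 * r)"
definition psiQ :: "real \<Rightarrow> (real \<Rightarrow> real) \<Rightarrow> real \<Rightarrow> real" where
  "psiQ k f r = (k - f r) / r ^ 2"

definition QTZ :: "nat \<Rightarrow> real \<Rightarrow> nat \<Rightarrow> (real \<Rightarrow> real) \<Rightarrow> real \<Rightarrow> real" where
  "QTZ D k m f r =
     - 4 * real m * (real m - 1) * (BQ f r)^2 * (psiQ k f r) ^ (m - 2)
     + real m * (2 * AQ f r - 4 * (real D - 2 * real m) * BQ f r) * (psiQ k f r) ^ (m - 1)
     - (real D - 2 * real m) * (real D - 2 * real m - 1) * (psiQ k f r) ^ m"

end

theory Submission
  imports Defs
begin

(*
  For m \<ge> 2 one has Z_(m)|_f = \<psi>^(m-2) P_m(A, B, \<psi>), where P_m = QTZ_reduced D m is a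
  polynomial whose coefficients are polynomials in m and D; for m = 1 instead \<psi> Z_(1)|_f = P_1.
  Hence each of the three products defining Z_(n+5) is \<psi>^(n+1) times a product P_i P_(n+5-i),
  and after clearing denominators the claim becomes a single polynomial identity in the
  indeterminates n, D, A, B, \<psi>.  Neither k nor r > 0 plays a role, and D \<ge> 2 suffices to
  divide by D (D - 1).
*)

definition QTZ_reduced :: "real \<Rightarrow> real \<Rightarrow> real \<Rightarrow> real \<Rightarrow> real \<Rightarrow> real" where
  "QTZ_reduced d \<mu> A B p =
     - 4 * \<mu> * (\<mu> - 1) * B\<^sup>2 + \<mu> * (2 * A - 4 * (d - 2 * \<mu>) * B) * p
     - (d - 2 * \<mu>) * (d - 2 * \<mu> - 1) * p\<^sup>2"

lemma QTZ_eq_QTZ_reduced: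
  assumes "m \<ge> 2"
  shows "QTZ D k m f r
    = QTZ_reduced (real D) (real m) (AQ f r) (BQ f r) (psiQ k f r) * psiQ k f r ^ (m - 2)"
proof -
  obtain j where m: "m = j + 2" using assms le_Suc_ex by (metis add.commute)
  show ?thesis
    unfolding QTZ_def QTZ_reduced_def m
    by (simp add: power_add power2_eq_square algebra_simps)
qed

lemma psiQ_mult_QTZ_one:
  "psiQ k f r * QTZ D k 1 f r = QTZ_reduced (real D) 1 (AQ f r) (BQ f r) (psiQ k f r)"
  unfolding QTZ_def QTZ_reduced_def by (simp add: power2_eq_square algebra_simps)

lemma QTZ_reduced_product_identity:
  fixes d x A B p :: real
  defines "P \<equiv> \<lambda>\<mu>. QTZ_reduced d \<mu> A B p"
  shows "- 3 * x * (x + 3) * P 1 * P (x + 4) + 3 * (x + 1) * (x + 4) * P 2 * P (x + 3)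
           - (x + 3) * (x + 4) * P 3 * P (x + 2)
         = d * (d - 1) * x * (x + 1) * p\<^sup>2 * P (x + 5)"
  unfolding P_def QTZ_reduced_def by algebra

lemma QTZ_reduced_combination:
  fixes d x A B p :: real
  defines "P \<equiv> \<lambda>\<mu>. QTZ_reduced d \<mu> A B p"
  assumes "x \<noteq> 0" "x + 1 \<noteq> 0" "d \<noteq> 0" "d - 1 \<noteq> 0"
  shows "- 3 * (x + 3) * P 1 * P (x + 4) / (d * (d - 1) * (x + 1))
         + 3 * (x + 4) * P 2 * P (x + 3) / (d * (d - 1) * x)
         - (x + 3) * (x + 4) * P 3 * P (x + 2) / (d * (d - 1) * x * (x + 1))
         = p\<^sup>2 * P (x + 5)"
proof -
  let ?c = "d * (d - 1)"
  let ?U = "- 3 * (x + 3) * P 1 * P (x + 4)"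
  let ?V = "3 * (x + 4) * P 2 * P (x + 3)"
  let ?W = "(x + 3) * (x + 4) * P 3 * P (x + 2)"
  have "x * ?U / (?c * x * (x + 1)) = ?U / (?c * (x + 1))"
       "(x + 1) * ?V / (?c * x * (x + 1)) = ?V / (?c * x)"
    using assms(2-5) by simp_all
  then have "?U / (?c * (x + 1)) + ?V / (?c * x) - ?W / (?c * x * (x + 1))
      = (x * ?U + (x + 1) * ?V - ?W) / (?c * x * (x + 1))"
    by (simp add: add_divide_distrib diff_divide_distrib)
  also have "x * ?U + (x + 1) * ?V - ?W = ?c * x * (x + 1) * (p\<^sup>2 * P (x + 5))"
    using QTZ_reduced_product_identity[of x d A B p] unfolding P_def by algebra
  also have "\<dots> / (?c * x * (x + 1)) = p\<^sup>2 * P (x + 5)"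
    using assms(2-5) by simp
  finally show ?thesis .
qed

lemma QTZ_recursion:
  fixes D n :: nat and k :: real
  assumes "D \<ge> 2" and "n \<ge> 1"
  shows "- 3 * (real n + 3) * QTZ D k 1 f r * QTZ D k (n + 4) f r
          / (real D * (real D - 1) * (real n + 1))
      + 3 * (real n + 4) * QTZ D k 2 f r * QTZ D k (n + 3) f r / (real D * (real D - 1) * real n)
      - (real n + 3) * (real n + 4) * QTZ D k 3 f r * QTZ D k (n + 2) f r
          / (real D * (real D - 1) * real n * (real n + 1))
      = QTZ D k (n + 5) f r" (is "?L = _")
proof -
  define p where "p = psiQ k f r"
  define P where "P \<mu> = QTZ_reduced (real D) \<mu> (AQ f r) (BQ f r) p" for \<mu>
  have QTZ_P: "QTZ D k m f r = P (real m) * p ^ (m - 2)" if "m \<ge> 2" for m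
    using QTZ_eq_QTZ_reduced[OF that] unfolding P_def p_def .
  have QTZ_1_n4: "QTZ D k 1 f r * QTZ D k (n + 4) f r = p ^ (n + 1) * (P 1 * P (real n + 4))"
    using psiQ_mult_QTZ_one[of k f r D] QTZ_P[of "n + 4"]
    by (simp add: P_def p_def algebra_simps)
  have QTZ_2_n3: "QTZ D k 2 f r * QTZ D k (n + 3) f r = p ^ (n + 1) * (P 2 * P (real n + 3))"
    using QTZ_P[of 2] QTZ_P[of "n + 3"] by (simp add: algebra_simps)
  have QTZ_3_n2: "QTZ D k 3 f r * QTZ D k (n + 2) f r = p ^ (n + 1) * (P 3 * P (real n + 2))"
    using QTZ_P[of 3] QTZ_P[of "n + 2"] by (simp add: algebra_simps)
  have "?L = p ^ (n + 1) *
        (- 3 * (real n + 3) * P 1 * P (real n + 4) / (real D * (real D - 1) * (real n + 1))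
         + 3 * (real n + 4) * P 2 * P (real n + 3) / (real D * (real D - 1) * real n)
         - (real n + 3) * (real n + 4) * P 3 * P (real n + 2)
             / (real D * (real D - 1) * real n * (real n + 1)))"
    unfolding mult.assoc[of _ _ "QTZ D k _ f r"] QTZ_1_n4 QTZ_2_n3 QTZ_3_n2
    by (simp only: distrib_left[of "p ^ (n + 1)"] right_diff_distrib[of "p ^ (n + 1)"]
        times_divide_eq_right mult_ac)
  also have "\<dots> = p ^ (n + 1) * (p\<^sup>2 * P (real n + 5))"
    using assms QTZ_reduced_combination[of "real n" "real D" "AQ f r" "BQ f r" p]
    unfolding P_def by simp
  also have "\<dots> = QTZ D k (n + 5) f r"
    using QTZ_P[of "n + 5"] by (simp add: power_add power2_eq_square power3_eq_cube)
  finally show ?thesis .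
qed

theorem mainTheorem3:
  fixes D n :: nat and k :: real
    and Z :: "nat \<Rightarrow> (real \<Rightarrow> real) \<Rightarrow> real \<Rightarrow> real"
  assumes "D \<ge> 5" and "n \<ge> 1" and "k \<in> {1, 0, -1}"
    and "\<forall>m \<in> {1, 2, 3, n + 2, n + 3, n + 4}. \<forall>f r. r > 0 \<longrightarrow> Z m f r = QTZ D k m f r"
  shows "\<forall>f r. r > 0 \<longrightarrow>
      - 3 * (real n + 3) * Z 1 f r * Z (n + 4) f r / (real D * (real D - 1) * (real n + 1))
      + 3 * (real n + 4) * Z 2 f r * Z (n + 3) f r / (real D * (real D - 1) * real n)
      - (real n + 3) * (real n + 4) * Z 3 f r * Z (n + 2) f r
          / (real D * (real D - 1) * real n * (real n + 1))
      = QTZ D k (n + 5) f r"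
  using assms(1,2,4) QTZ_recursion[of D n k] by simp

end
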